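(* Let $V$ be an infinite-dimensional vector space over a field $\mathbb{F}$, let $\lambda\in\mathbb{F}$, and let $p_1,p_2,p_3\in\mathbb{F}[t]$ be split polynomials of degree $2$. Then $\lambda\,\mathrm{id}_V$ is a $(p_1,p_2,p_3)$-sum if and only if $\lambda$ is a $(p_1,p_2,p_3)$-sum or $2\lambda=\operatorname{tr}p_1+\operatorname{tr}p_2+\operatorname{tr}p_3$.
   Context: An endomorphism $u$ is a $(p_1,p_2,p_3)$-sum if $u=u_1+u_2+u_3$ for some endomorphisms $u_k$ of $V$ with $p_k(u_k)=0$ for all $k$. A scalar $\lambda$ is a $(p_1,p_2,p_3)$-sum if $\lambda=x_1+x_2+x_3$ with $x_k\in\mathbb{F}$ and $p_k(x_k)=0$ for all $k$. The trace $\operatorname{tr}p$ of a nonconstant polynomial $p$ with leading coefficient $\alpha$ is the opposite of the coefficient of $\alpha^{-1}p$ on $t^{\deg p-1}$. *)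

theory Defs
  imports Main "HOL-Computational_Algebra.Polynomial"
begin

definition poly_endo :: "('a::field \<Rightarrow> 'v::ab_group_add \<Rightarrow> 'v) \<Rightarrow> 'a poly \<Rightarrow> ('v \<Rightarrow> 'v) \<Rightarrow> ('v \<Rightarrow> 'v)" where
  "poly_endo scale p u = (\<lambda>v. \<Sum>i\<le>degree p. scale (coeff p i) ((u ^^ i) v))"

definition split_poly :: "'a::field poly \<Rightarrow> bool" where
  "split_poly p \<longleftrightarrow> (\<exists>c rs. p = smult c (\<Prod>r\<leftarrow>rs. [:- r, 1:]))"

definition poly_trace :: "'a::field poly \<Rightarrow> 'a" where
  "poly_trace p = - (coeff p (degree p - 1) / lead_coeff p)"

definition scalar_sum3 :: "'a::field poly \<Rightarrow> 'a poly \<Rightarrow> 'a poly \<Rightarrow> 'a \<Rightarrow> bool" where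
  "scalar_sum3 p1 p2 p3 lam \<longleftrightarrow>
     (\<exists>x1 x2 x3. poly p1 x1 = 0 \<and> poly p2 x2 = 0 \<and> poly p3 x3 = 0 \<and> lam = x1 + x2 + x3)"

definition endo_sum3 :: "('a::field \<Rightarrow> 'v::ab_group_add \<Rightarrow> 'v) \<Rightarrow> 'a poly \<Rightarrow> 'a poly \<Rightarrow> 'a poly \<Rightarrow> ('v \<Rightarrow> 'v) \<Rightarrow> bool" where
  "endo_sum3 scale p1 p2 p3 u \<longleftrightarrow>
     (\<exists>u1 u2 u3. Vector_Spaces.linear scale scale u1 \<and> Vector_Spaces.linear scale scale u2 \<and>
        Vector_Spaces.linear scale scale u3 \<and>
        poly_endo scale p1 u1 = (\<lambda>_. 0) \<and> poly_endo scale p2 u2 = (\<lambda>_. 0) \<and>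
        poly_endo scale p3 u3 = (\<lambda>_. 0) \<and>
        u = (\<lambda>v. u1 v + u2 v + u3 v))"

end

theory Submission
  imports Defs
begin

text \<open>If \<open>2 lam \<noteq> tr p1 + tr p2 + tr p3\<close>, expanding \<open>u3\<^sup>2 = (lam - u1 - u2)\<^sup>2\<close> writes the
  anticommutator \<open>u1 u2 + u2 u1\<close> as an affine combination of \<open>id\<close>, \<open>u1\<close>, \<open>u2\<close>, and commuting it
  with \<open>u1\<close> shows that \<open>u1\<close> and \<open>u2\<close> commute. Commuting endomorphisms annihilated by split
  polynomials share an eigenvector, and its eigenvalues exhibit \<open>lam\<close> as a scalar sum.
  Conversely, an infinite-dimensional space is isomorphic to \<open>W \<oplus> W\<close>; there \<open>2 \<times> 2\<close> block
  matrices with scalar entries are annihilated by their characteristic polynomials, and a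
  triangular \<open>u1\<close>, a triangular \<open>u2\<close> and \<open>u3 = lam - u1 - u2\<close> realise \<open>lam id\<close> as soon as the
  traces add up to \<open>2 lam\<close>.\<close>

lemma degree_prod_list_monic_linear:
  "degree (\<Prod>r\<leftarrow>rs. [:- r, 1:]) = length (rs :: 'a::field list)"
proof (induction rs)
  case (Cons r rs)
  have "(\<Prod>r\<leftarrow>rs. [:- r, 1:]) \<noteq> 0"
    by (auto simp: prod_list_zero_iff)
  with Cons show ?case
    by (simp add: degree_mult_eq del: mult_pCons_left)
qed simp

lemma coeff_degree2_nonzero: "degree p = 2 \<Longrightarrow> coeff p 2 \<noteq> 0"
  using leading_coeff_0_iff[of p] by fastforce

lemma poly_trace_degree2: "degree p = 2 \<Longrightarrow> poly_trace p = - (coeff p 1 / coeff p 2)"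
  unfolding poly_trace_def by simp

lemma split_poly_degree2_roots:
  fixes p :: "'a::field poly"
  assumes "split_poly p" and "degree p = 2"
  obtains a b where "poly_trace p = a + b" and "coeff p 0 / coeff p 2 = a * b"
proof -
  obtain c rs where p: "p = smult c (\<Prod>r\<leftarrow>rs. [:- r, 1:])"
    using assms(1) unfolding split_poly_def by blast
  have "c \<noteq> 0"
    using assms(2) p by auto
  then have "length rs = 2"
    using assms(2) by (simp add: p degree_prod_list_monic_linear)
  then obtain a b where "rs = [a, b]"
    by (auto simp: numeral_2_eq_2 length_Suc_conv)
  then have "coeff p 0 = c * (a * b)" "coeff p 1 = - (c * (a + b))" "coeff p 2 = c"
    by (simp_all add: p numeral_2_eq_2 algebra_simps)
  with \<open>c \<noteq> 0\<close> show thesis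
    by (intro that[of a b]) (simp_all add: poly_trace_degree2[OF assms(2)])
qed

context vector_space
begin

interpretation endo: vector_space_pair scale scale ..

lemma funpow_eigenvector:
  assumes "Vector_Spaces.linear scale scale u" and "u y = x *s y"
  shows "(u ^^ i) y = x ^ i *s y"
  by (induction i) (simp_all add: assms endo.linear_scale)

lemma poly_endo_eigenvector:
  assumes "Vector_Spaces.linear scale scale u" and "u y = x *s y"
  shows "poly_endo scale p u y = poly p x *s y"
  by (simp add: poly_endo_def funpow_eigenvector[OF assms] poly_altdef scale_sum_left)

lemma poly_eq_0_if_eigenvalue:
  assumes "Vector_Spaces.linear scale scale u" and "poly_endo scale p u = (\<lambda>_. 0)"
    and "y \<noteq> 0" and "u y = x *s y"
  shows "poly p x = 0"
  using poly_endo_eigenvector[OF assms(1,4), of p] assms(2,3) by (simp add: fun_eq_iff)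

lemma poly_endo_degree2:
  assumes "degree p = 2"
  shows "poly_endo scale p u v = coeff p 0 *s v + coeff p 1 *s u v + coeff p 2 *s u (u v)"
  unfolding poly_endo_def assms by (simp add: numeral_2_eq_2 atMost_Suc add_ac)

lemma poly_endo_degree2_eq_0_iff:
  assumes "degree p = 2"
  shows "poly_endo scale p u = (\<lambda>_. 0) \<longleftrightarrow>
    (\<forall>v. u (u v) = poly_trace p *s u v - (coeff p 0 / coeff p 2) *s v)"
proof -
  have c2: "coeff p 2 \<noteq> 0"
    using assms by (rule coeff_degree2_nonzero)
  have "poly_endo scale p u v =
      coeff p 2 *s (u (u v) - (poly_trace p *s u v - (coeff p 0 / coeff p 2) *s v))" for v
    using c2 by (simp add: poly_endo_degree2[OF assms] poly_trace_degree2[OF assms]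
        scale_right_diff_distrib algebra_simps)
  with c2 show ?thesis
    by (auto simp: fun_eq_iff)
qed

lemma split_quadratic_eigenvector:
  assumes "Vector_Spaces.linear scale scale u" and "\<And>v. u (u v) = (a + b) *s u v - (a * b) *s v"
    and "v \<noteq> 0"
  obtains y e where "y \<in> {v, u v - b *s v}" and "y \<noteq> 0" and "u y = e *s y"
proof (cases "u v - b *s v = 0")
  case True
  with assms(3) show thesis
    by (intro that[of v b]) simp_all
next
  case False
  have "u (u v - b *s v) = a *s (u v - b *s v)"
    using assms(1,2) by (simp add: endo.linear_diff endo.linear_scale scale_left_distrib
        scale_right_diff_distrib)
  with False show thesis
    by (intro that[of "u v - b *s v" a]) simp_all
qed

lemma common_eigenvector:
  assumes l1: "Vector_Spaces.linear scale scale u1" and l2: "Vector_Spaces.linear scale scale u2"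
    and q1: "\<And>v. u1 (u1 v) = (a1 + b1) *s u1 v - (a1 * b1) *s v"
    and q2: "\<And>v. u2 (u2 v) = (a2 + b2) *s u2 v - (a2 * b2) *s v"
    and comm: "\<And>v. u1 (u2 v) = u2 (u1 v)"
    and "v \<noteq> (0 :: 'b)"
  obtains y e1 e2 where "y \<noteq> 0" and "u1 y = e1 *s y" and "u2 y = e2 *s y"
proof -
  obtain y1 e1 where "y1 \<noteq> 0" and y1: "u1 y1 = e1 *s y1"
    using split_quadratic_eigenvector[OF l1 q1 \<open>v \<noteq> 0\<close>] by blast
  then obtain y e2 where y: "y \<in> {y1, u2 y1 - b2 *s y1}" "y \<noteq> 0" "u2 y = e2 *s y"
    using split_quadratic_eigenvector[OF l2 q2] by blast
  have "u1 y = e1 *s y"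
    using y(1) by (auto simp: y1 comm endo.linear_diff[OF l1] endo.linear_scale[OF l1]
        endo.linear_scale[OF l2] scale_right_diff_distrib mult.commute)
  with y show thesis
    using that by blast
qed

lemma anticommutator_if_sum_scalar:
  assumes l1: "Vector_Spaces.linear scale scale u1" and l2: "Vector_Spaces.linear scale scale u2"
    and q1: "\<And>v. u1 (u1 v) = T1 *s u1 v - N1 *s v"
    and q2: "\<And>v. u2 (u2 v) = T2 *s u2 v - N2 *s v"
    and q3: "\<And>v. u3 (u3 v) = T3 *s u3 v - N3 *s v"
    and sum: "\<And>v. u1 v + u2 v + u3 v = lam *s v"
  shows "u1 (u2 v) + u2 (u1 v) = (N1 + N2 - N3 + T3 * lam - lam * lam) *s v
    + (2 * lam - T1 - T3) *s u1 v + (2 * lam - T2 - T3) *s u2 v"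
proof -
  have u3: "u3 x = lam *s x - u1 x - u2 x" for x
    using sum[of x] by (simp add: algebra_simps)
  define w where "w = lam *s v - u1 v - u2 v"
  have "u3 v = w"
    by (simp add: u3 w_def)
  then have "lam *s w - u1 w - u2 w = T3 *s w - N3 *s v"
    using q3[of v] u3[of w] by simp
  moreover have "u1 w = lam *s u1 v - (T1 *s u1 v - N1 *s v) - u1 (u2 v)"
    by (simp add: w_def q1 endo.linear_diff[OF l1] endo.linear_scale[OF l1])
  moreover have "u2 w = lam *s u2 v - u2 (u1 v) - (T2 *s u2 v - N2 *s v)"
    by (simp add: w_def q2 endo.linear_diff[OF l2] endo.linear_scale[OF l2])
  ultimately have "u1 (u2 v) + u2 (u1 v) = T3 *s w - N3 *s v - lam *s w
      + (lam *s u1 v - (T1 *s u1 v - N1 *s v)) + (lam *s u2 v - (T2 *s u2 v - N2 *s v))"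
    by (simp add: algebra_simps)
  moreover have "(lam * 2) *s x = lam *s x + lam *s x" for x
    by (simp only: mult_2_right scale_left_distrib)
  ultimately show ?thesis
    by (simp add: w_def algebra_simps scale_left_distrib scale_right_distrib
        scale_left_diff_distrib scale_right_diff_distrib)
qed

text \<open>Commuting \<open>u1\<close> with the anticommutator gives \<open>[u1\<^sup>2, u2] = \<beta> [u1, u2]\<close>, while the
  quadratic relation gives \<open>[u1\<^sup>2, u2] = T [u1, u2]\<close>.\<close>
lemma commute_if_anticommutator_affine:
  assumes l1: "Vector_Spaces.linear scale scale u1" and l2: "Vector_Spaces.linear scale scale u2"
    and q1: "\<And>v. u1 (u1 v) = T *s u1 v - N *s v"
    and anti: "\<And>v. u1 (u2 v) + u2 (u1 v) = c *s v + \<alpha> *s u1 v + \<beta> *s u2 v"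
    and "T \<noteq> \<beta>"
  shows "u1 (u2 v) = u2 (u1 v)"
proof -
  define d where "d = u1 (u2 v) - u2 (u1 v)"
  have "u1 (u1 (u2 v)) = c *s u1 v + \<alpha> *s u1 (u1 v) + \<beta> *s u1 (u2 v) - u1 (u2 (u1 v))"
    using arg_cong[OF anti[of v], of u1]
    by (simp add: endo.linear_add[OF l1] endo.linear_scale[OF l1] eq_diff_eq)
  moreover have "u2 (u1 (u1 v)) = c *s u1 v + \<alpha> *s u1 (u1 v) + \<beta> *s u2 (u1 v) - u1 (u2 (u1 v))"
    using anti[of "u1 v"] by (simp add: eq_diff_eq add.commute)
  moreover have "T *s d = u1 (u1 (u2 v)) - u2 (u1 (u1 v))"
    by (simp add: d_def q1 endo.linear_diff[OF l2] endo.linear_scale[OF l2]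
        scale_right_diff_distrib)
  ultimately have "T *s d = \<beta> *s d"
    by (simp add: d_def scale_right_diff_distrib)
  with \<open>T \<noteq> \<beta>\<close> have "d = 0"
    by (metis scale_right_imp_eq)
  then show ?thesis
    by (simp add: d_def)
qed

lemma endo_sum3_if_scalar_sum3:
  assumes "scalar_sum3 p1 p2 p3 lam"
  shows "endo_sum3 scale p1 p2 p3 (\<lambda>v. lam *s v)"
proof -
  obtain x1 x2 x3 where roots: "poly p1 x1 = 0" "poly p2 x2 = 0" "poly p3 x3 = 0"
    and lam: "lam = x1 + x2 + x3"
    using assms unfolding scalar_sum3_def by blast
  have scalar_root: "poly_endo scale p (\<lambda>v. x *s v) = (\<lambda>_. 0)" if "poly p x = 0" for p x
    using poly_endo_eigenvector[OF linear_scale_self refl] that by (simp add: fun_eq_iff)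
  show ?thesis
    unfolding endo_sum3_def
    by (rule exI[of _ "\<lambda>v. x1 *s v"], rule exI[of _ "\<lambda>v. x2 *s v"], rule exI[of _ "\<lambda>v. x3 *s v"])
      (simp add: linear_scale_self scalar_root roots lam scale_left_distrib fun_eq_iff)
qed

lemma scalar_sum3_if_endo_sum3:
  assumes "v \<noteq> (0 :: 'b)"
    and "split_poly p1" and d1: "degree p1 = 2" and "split_poly p2" and d2: "degree p2 = 2"
    and d3: "degree p3 = 2"
    and "endo_sum3 scale p1 p2 p3 (\<lambda>v. lam *s v)"
    and "2 * lam \<noteq> poly_trace p1 + poly_trace p2 + poly_trace p3"
  shows "scalar_sum3 p1 p2 p3 lam"
proof -
  obtain u1 u2 u3 where l1: "Vector_Spaces.linear scale scale u1"
    and l2: "Vector_Spaces.linear scale scale u2" and l3: "Vector_Spaces.linear scale scale u3"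
    and z1: "poly_endo scale p1 u1 = (\<lambda>_. 0)" and z2: "poly_endo scale p2 u2 = (\<lambda>_. 0)"
    and z3: "poly_endo scale p3 u3 = (\<lambda>_. 0)" and "(\<lambda>v. lam *s v) = (\<lambda>v. u1 v + u2 v + u3 v)"
    using assms(7) unfolding endo_sum3_def by blast
  then have sum: "u1 v + u2 v + u3 v = lam *s v" for v
    by (simp add: fun_eq_iff)
  note q1 = z1[unfolded poly_endo_degree2_eq_0_iff[OF d1], rule_format]
  note q2 = z2[unfolded poly_endo_degree2_eq_0_iff[OF d2], rule_format]
  note q3 = z3[unfolded poly_endo_degree2_eq_0_iff[OF d3], rule_format]
  have "poly_trace p1 \<noteq> 2 * lam - poly_trace p2 - poly_trace p3"
    using assms(8) by (simp add: algebra_simps)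
  then have comm: "u1 (u2 v) = u2 (u1 v)" for v
    by (rule commute_if_anticommutator_affine
        [OF l1 l2 q1 anticommutator_if_sum_scalar[OF l1 l2 q1 q2 q3 sum]])
  obtain a1 b1 where t1: "poly_trace p1 = a1 + b1" and n1: "coeff p1 0 / coeff p1 2 = a1 * b1"
    using split_poly_degree2_roots[OF assms(2) d1] .
  obtain a2 b2 where t2: "poly_trace p2 = a2 + b2" and n2: "coeff p2 0 / coeff p2 2 = a2 * b2"
    using split_poly_degree2_roots[OF assms(4) d2] .
  obtain y e1 e2 where y: "y \<noteq> 0" and y1: "u1 y = e1 *s y" and y2: "u2 y = e2 *s y"
    using common_eigenvector[OF l1 l2 q1[unfolded t1 n1] q2[unfolded t2 n2] comm assms(1)] .
  have y3: "u3 y = (lam - e1 - e2) *s y"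
    using sum[of y] by (simp add: y1 y2 scale_left_diff_distrib algebra_simps)
  show ?thesis
    unfolding scalar_sum3_def
    using poly_eq_0_if_eigenvalue[OF l1 z1 y y1] poly_eq_0_if_eigenvalue[OF l2 z2 y y2]
      poly_eq_0_if_eigenvalue[OF l3 z3 y y3]
    by (intro exI[of _ e1] exI[of _ e2] exI[of _ "lam - e1 - e2"]) simp
qed

lemma infinite_basis_doubling:
  assumes "\<not> (\<exists>B. finite B \<and> span B = UNIV)"
  obtains B and h :: "'b + 'b \<Rightarrow> 'b"
  where "independent B" and "span B = UNIV" and "bij_betw h (B <+> B) B"
proof -
  obtain B where "independent B" and "span B = UNIV"
    using basis_exists[of UNIV] by (metis top.extremum_uniqueI)
  moreover from this assms have "infinite B"
    by blast
  then have "ordIso2 (card_of (B <+> B)) (card_of B)"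
    by (rule card_of_Plus_infinite1[OF _ card_of_mono1]) simp
  then obtain h where "bij_betw h (B <+> B) B"
    using card_of_ordIso by blast
  ultimately show thesis
    using that by blast
qed

context
  fixes B :: "'b set" and h :: "'b + 'b \<Rightarrow> 'b"
  assumes independent_B: "independent B" and span_B: "span B = UNIV"
    and bij_h: "bij_betw h (B <+> B) B"
begin

text \<open>The bijection \<open>h\<close> splits the basis into two copies of \<open>B\<close>, so that \<open>V \<cong> W \<oplus> W\<close>;
  \<open>block_endo a b c d\<close> acts on this decomposition by the matrix \<open>[[a, b], [c, d]]\<close>.\<close>
definition block_endo :: "'a \<Rightarrow> 'a \<Rightarrow> 'a \<Rightarrow> 'a \<Rightarrow> 'b \<Rightarrow> 'b" where
  "block_endo a b c d = endo.construct B (\<lambda>v. case inv_into (B <+> B) h v of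
      Inl x \<Rightarrow> a *s v + c *s h (Inr x)
    | Inr x \<Rightarrow> b *s h (Inl x) + d *s v)"

lemma linear_block_endo: "Vector_Spaces.linear scale scale (block_endo a b c d)"
  unfolding block_endo_def using independent_B by (rule endo.linear_construct)

lemma block_endo_on_basis:
  assumes "s \<in> B <+> B"
  shows "block_endo a b c d (h s) = (case s of
      Inl x \<Rightarrow> a *s h (Inl x) + c *s h (Inr x)
    | Inr x \<Rightarrow> b *s h (Inl x) + d *s h (Inr x))"
  using assms bij_betw_apply[OF bij_h assms] bij_betw_inv_into_left[OF bij_h assms]
  unfolding block_endo_def by (simp add: endo.construct_basis[OF independent_B] split: sum.split)

lemma block_endo_Inl: "x \<in> B \<Longrightarrow> block_endo a b c d (h (Inl x)) = a *s h (Inl x) + c *s h (Inr x)"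
  using block_endo_on_basis[of "Inl x"] by (simp add: InlI)

lemma block_endo_Inr: "x \<in> B \<Longrightarrow> block_endo a b c d (h (Inr x)) = b *s h (Inl x) + d *s h (Inr x)"
  using block_endo_on_basis[of "Inr x"] by (simp add: InrI)

lemma linear_eq_on_block_basis:
  assumes "Vector_Spaces.linear scale scale f" and "Vector_Spaces.linear scale scale g"
    and "\<And>x. x \<in> B \<Longrightarrow> f (h (Inl x)) = g (h (Inl x))"
    and "\<And>x. x \<in> B \<Longrightarrow> f (h (Inr x)) = g (h (Inr x))"
  shows "f v = g v"
proof -
  have "f e = g e" if "e \<in> B" for e
  proof -
    obtain s where "s \<in> B <+> B" and "e = h s"
      using bij_betw_imp_surj_on[OF bij_h] \<open>e \<in> B\<close> by blast
    with assms(3,4) show ?thesis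
      by (cases s) auto
  qed
  then show ?thesis
    using endo.linear_eq_on[OF assms(1,2)] span_B by blast
qed

lemma block_endo_cayley_hamilton:
  "block_endo a b c d (block_endo a b c d v) =
    (a + d) *s block_endo a b c d v - (a * d - b * c) *s v"
proof -
  let ?M = "block_endo a b c d"
  have "Vector_Spaces.linear scale scale (\<lambda>v. ?M (?M v))"
    using Vector_Spaces.linear_compose[OF linear_block_endo linear_block_endo]
    by (simp add: comp_def)
  moreover have "Vector_Spaces.linear scale scale (\<lambda>v. (a + d) *s ?M v - (a * d - b * c) *s v)"
    by (intro endo.linear_compose_sub endo.linear_compose_scale_right linear_block_endo
        linear_scale_self)
  ultimately show ?thesis
    by (rule linear_eq_on_block_basis)
      (simp_all add: block_endo_Inl block_endo_Inr endo.linear_add[OF linear_block_endo]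
        endo.linear_scale[OF linear_block_endo] algebra_simps scale_left_distrib
        scale_right_distrib scale_left_diff_distrib scale_right_diff_distrib)
qed

lemma block_endo_add:
  "block_endo a b c d v + block_endo a' b' c' d' v = block_endo (a + a') (b + b') (c + c') (d + d') v"
  by (rule linear_eq_on_block_basis)
    (simp_all add: endo.linear_compose_add linear_block_endo block_endo_Inl block_endo_Inr
      scale_left_distrib algebra_simps)

lemma block_endo_scalar: "block_endo a 0 0 a v = a *s v"
  by (rule linear_eq_on_block_basis) (simp_all add: linear_block_endo block_endo_Inl block_endo_Inr)

end

lemma endo_sum3_if_trace:
  assumes "\<not> (\<exists>B. finite B \<and> span B = UNIV)"
    and "split_poly p1" and d1: "degree p1 = 2" and "split_poly p2" and d2: "degree p2 = 2"
    and d3: "degree p3 = 2"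
    and trace: "2 * lam = poly_trace p1 + poly_trace p2 + poly_trace p3"
  shows "endo_sum3 scale p1 p2 p3 (\<lambda>v. lam *s v)"
proof -
  obtain B h where basis: "independent B" "span B = UNIV" "bij_betw h (B <+> B) B"
    using infinite_basis_doubling[OF assms(1)] .
  define M where "M = local.block_endo B h"
  note linear_M = linear_block_endo[OF basis, folded M_def]
  note cayley_hamilton = block_endo_cayley_hamilton[OF basis, folded M_def]
  obtain a1 b1 where t1: "poly_trace p1 = a1 + b1" and n1: "coeff p1 0 / coeff p1 2 = a1 * b1"
    using split_poly_degree2_roots[OF assms(2) d1] .
  obtain a2 b2 where t2: "poly_trace p2 = a2 + b2" and n2: "coeff p2 0 / coeff p2 2 = a2 * b2"
    using split_poly_degree2_roots[OF assms(4) d2] .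
  txt \<open>Upper and lower triangular \<open>u1\<close>, \<open>u2\<close>; then \<open>u3 = lam - u1 - u2\<close> has trace
    \<open>poly_trace p3\<close> by the trace condition, and the free entry \<open>y\<close> fixes its determinant.\<close>
  define y where "y = (lam - a1 - a2) * (lam - b1 - b2) - coeff p3 0 / coeff p3 2"
  define u1 where "u1 = M a1 1 0 b1"
  define u2 where "u2 = M a2 0 y b2"
  define u3 where "u3 = M (lam - a1 - a2) (- 1) (- y) (lam - b1 - b2)"
  have "poly_endo scale p1 u1 = (\<lambda>_. 0)"
    unfolding poly_endo_degree2_eq_0_iff[OF d1] u1_def t1 n1 cayley_hamilton by simp
  moreover have "poly_endo scale p2 u2 = (\<lambda>_. 0)"
    unfolding poly_endo_degree2_eq_0_iff[OF d2] u2_def t2 n2 cayley_hamilton by simp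
  moreover have "poly_endo scale p3 u3 = (\<lambda>_. 0)"
  proof -
    have "poly_trace p3 = (lam - a1 - a2) + (lam - b1 - b2)"
      using trace t1 t2 by (simp add: algebra_simps mult_2)
    then show ?thesis
      unfolding poly_endo_degree2_eq_0_iff[OF d3] u3_def cayley_hamilton by (simp add: y_def)
  qed
  moreover have "u1 v + u2 v + u3 v = lam *s v" for v
  proof -
    have "u1 v + u2 v + u3 v =
        M (a1 + a2 + (lam - a1 - a2)) (1 + 0 + - 1) (0 + y + - y) (b1 + b2 + (lam - b1 - b2)) v"
      unfolding u1_def u2_def u3_def M_def block_endo_add[OF basis] ..
    also have "\<dots> = M lam 0 0 lam v"
      by simp
    finally show ?thesis
      unfolding M_def block_endo_scalar[OF basis] .
  qed
  ultimately show ?thesis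
    unfolding endo_sum3_def
    by (intro exI[of _ u1] exI[of _ u2] exI[of _ u3]) (simp add: u1_def u2_def u3_def linear_M fun_eq_iff)
qed

end

theorem proposition1:
  fixes scale :: "'a::field \<Rightarrow> 'v::ab_group_add \<Rightarrow> 'v"
    and lam :: 'a and p1 p2 p3 :: "'a poly"
  assumes "vector_space scale"
    and "\<not> (\<exists>B. finite B \<and> module.span scale B = UNIV)"
    and "split_poly p1" and "degree p1 = 2"
    and "split_poly p2" and "degree p2 = 2"
    and "split_poly p3" and "degree p3 = 2"
  shows "endo_sum3 scale p1 p2 p3 (\<lambda>v. scale lam v) \<longleftrightarrow>
         (scalar_sum3 p1 p2 p3 lam \<or> 2 * lam = poly_trace p1 + poly_trace p2 + poly_trace p3)"
proof -
  interpret vector_space scale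
    by fact
  obtain v :: 'v where "v \<noteq> 0"
    using assms(2) span_empty by (metis UNIV_eq_I finite.emptyI singletonI)
  then show ?thesis
    using scalar_sum3_if_endo_sum3[OF _ assms(3-6,8)] endo_sum3_if_scalar_sum3
      endo_sum3_if_trace[OF assms(2-6,8)]
    by blast
qed

end
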